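(* For all $m,n\in\mathbb N^+$, the ideal $\langle X^m,Y^n\rangle$ is an atom of $\mathrm{Mon}(R)$.
   Context: Let $K$ be a field, $N\ge2$, $R=K[X_1,\dots,X_N]$, $X=X_1$, $Y=X_2$. $\mathrm{Mon}(R)$ is the monoid of nonzero monomial ideals of $R$ under ideal multiplication, with identity $R$ (its only unit); an atom of $\mathrm{Mon}(R)$ is an $I\ne R$ in $\mathrm{Mon}(R)$ not a product of two elements of $\mathrm{Mon}(R)\setminus\{R\}$. *)

theory Defs
  imports "HOL-Library.Poly_Mapping"
begin

text \<open>Polynomials in countably many variables X_0, X_1, ... over K, as finitely supported
  maps from monomials (exponent vectors) to coefficients. Variable X_{i+1}
  of the paper is index i here.\<close>

type_synonym 'k mpoly = "(nat \<Rightarrow>\<^sub>0 nat) \<Rightarrow>\<^sub>0 'k"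

definition polyR :: "nat \<Rightarrow> 'k::field mpoly set" where
  "polyR N = {p. \<forall>e \<in> Poly_Mapping.keys p. Poly_Mapping.keys e \<subseteq> {..<N}}"

definition monomial :: "(nat \<Rightarrow>\<^sub>0 nat) \<Rightarrow> 'k::field mpoly" where
  "monomial e = Poly_Mapping.single e 1"

definition var :: "nat \<Rightarrow> 'k::field mpoly" where
  "var i = monomial (Poly_Mapping.single i 1)"

definition monomials :: "nat \<Rightarrow> 'k::field mpoly set" where
  "monomials N = {monomial e | e. Poly_Mapping.keys e \<subseteq> {..<N}}"

definition is_ideal :: "nat \<Rightarrow> 'k::field mpoly set \<Rightarrow> bool" where
  "is_ideal N I \<longleftrightarrow> I \<subseteq> polyR N \<and> 0 \<in> I \<and> (\<forall>f\<in>I. \<forall>g\<in>I. f + g \<in> I)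
     \<and> (\<forall>r\<in>polyR N. \<forall>f\<in>I. r * f \<in> I)"

definition ideal_gen :: "nat \<Rightarrow> 'k::field mpoly set \<Rightarrow> 'k mpoly set" where
  "ideal_gen N S = \<Inter>{I. is_ideal N I \<and> S \<subseteq> I}"

definition Mon :: "nat \<Rightarrow> 'k::field mpoly set set" where
  "Mon N = {I. \<exists>S \<subseteq> monomials N. I = ideal_gen N S \<and> I \<noteq> {0}}"

definition ideal_mult :: "nat \<Rightarrow> 'k::field mpoly set \<Rightarrow> 'k mpoly set \<Rightarrow> 'k mpoly set" where
  "ideal_mult N I J = ideal_gen N {f * g | f g. f \<in> I \<and> g \<in> J}"

definition is_atom_Mon :: "nat \<Rightarrow> 'k::field mpoly set \<Rightarrow> bool" where
  "is_atom_Mon N I \<longleftrightarrow> I \<in> Mon N \<and> I \<noteq> polyR N \<and>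
     \<not> (\<exists>A \<in> Mon N - {polyR N}. \<exists>B \<in> Mon N - {polyR N}. I = ideal_mult N A B)"

end

theory Submission
  imports Defs
begin

text \<open>Every polynomial of a product of monomial ideals \<open>\<langle>S\<rangle>\<langle>T\<rangle>\<close> has its support in the
  multiples of the monomials \<open>st\<close>, \<open>s \<in> S\<close>, \<open>t \<in> T\<close>; and the support of every polynomial
  of \<open>\<langle>X\<^sup>m, Y\<^sup>n\<rangle>\<close> consists of multiples of \<open>X\<^sup>m\<close> or \<open>Y\<^sup>n\<close>.
  If \<open>\<langle>X\<^sup>m, Y\<^sup>n\<rangle> = AB\<close> with \<open>A\<close>, \<open>B\<close> proper, then \<open>X\<^sup>m\<close> is a multiple of \<open>ab\<close> with
  generators \<open>a\<close> of \<open>A\<close> and \<open>b \<noteq> 1\<close> of \<open>B\<close>, so \<open>a = X\<^sup>i\<close> with \<open>i < m\<close>; symmetrically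
  \<open>B\<close> has a generator \<open>Y\<^sup>j\<close> with \<open>j < n\<close>. But then \<open>X\<^sup>i Y\<^sup>j \<in> AB\<close> is a multiple of
  neither \<open>X\<^sup>m\<close> nor \<open>Y\<^sup>n\<close>.\<close>

definition exp_dvd :: "(nat \<Rightarrow>\<^sub>0 nat) \<Rightarrow> (nat \<Rightarrow>\<^sub>0 nat) \<Rightarrow> bool" where
  "exp_dvd s e \<longleftrightarrow> (\<forall>i. Poly_Mapping.lookup s i \<le> Poly_Mapping.lookup e i)"

lemma exp_dvd_refl: "exp_dvd e e"
  unfolding exp_dvd_def by simp

lemma exp_dvd_add: "exp_dvd s e \<Longrightarrow> exp_dvd t f \<Longrightarrow> exp_dvd (s + t) (e + f)"
  unfolding exp_dvd_def by (simp add: lookup_add add_mono)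

lemma exp_dvd_add_left: "exp_dvd s f \<Longrightarrow> exp_dvd s (e + f)"
  unfolding exp_dvd_def by (simp add: lookup_add add_increasing)

lemma exp_dvd_single_iff: "exp_dvd (Poly_Mapping.single i k) e \<longleftrightarrow> k \<le> Poly_Mapping.lookup e i"
  unfolding exp_dvd_def by (metis lookup_single_eq lookup_single_not_eq zero_le)

lemma exp_dvd_single_proper_factor:
  assumes dvd: "exp_dvd (a + b) (Poly_Mapping.single j k)" and "b \<noteq> 0"
  shows "Poly_Mapping.lookup a j < k" and "i \<noteq> j \<Longrightarrow> Poly_Mapping.lookup a i = 0"
proof -
  have le: "Poly_Mapping.lookup a l + Poly_Mapping.lookup b l
      \<le> Poly_Mapping.lookup (Poly_Mapping.single j k) l" for l
    using dvd unfolding exp_dvd_def by (simp add: lookup_add)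
  obtain l where l: "Poly_Mapping.lookup b l \<noteq> 0"
    using \<open>b \<noteq> 0\<close> by (metis lookup_zero poly_mapping_eqI)
  then have "l = j"
    using le[of l] by (metis add_is_0 le_zero_eq lookup_single_not_eq)
  then show "Poly_Mapping.lookup a j < k"
    using le[of j] l by simp
  show "Poly_Mapping.lookup a i = 0" if "i \<noteq> j"
    using le[of i] that by (simp add: lookup_single_not_eq)
qed

lemma monomial_mult: "(monomial a :: 'k::field mpoly) * monomial b = monomial (a + b)"
  unfolding monomial_def by (simp add: mult_single)

lemma monomial_zero: "(monomial 0 :: 'k::field mpoly) = 1"
  unfolding monomial_def by simp

lemma keys_monomial: "Poly_Mapping.keys (monomial e :: 'k::field mpoly) = {e}"
  unfolding monomial_def by simp

lemma monomial_inject: "(monomial e :: 'k::field mpoly) = monomial e' \<longleftrightarrow> e = e'"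
  by (metis keys_monomial singleton_inject)

lemma var_power: "(var i :: 'k::field mpoly) ^ k = monomial (Poly_Mapping.single i k)"
  by (induct k) (simp_all add: var_def monomial_def mult_single single_add[symmetric] add.commute)

lemma polyR_add:
  assumes "f \<in> polyR N" and "g \<in> polyR N"
  shows "(f + g :: 'k::field mpoly) \<in> polyR N"
  using assms keys_add[of f g] unfolding polyR_def by blast

lemma polyR_mult:
  assumes "f \<in> polyR N" and "g \<in> polyR N"
  shows "(f * g :: 'k::field mpoly) \<in> polyR N"
  unfolding polyR_def
proof (intro CollectI ballI)
  fix e assume "e \<in> Poly_Mapping.keys (f * g)"
  then obtain a b where "e = a + b" "a \<in> Poly_Mapping.keys f" "b \<in> Poly_Mapping.keys g"
    using keys_mult by blast
  with assms keys_add[of a b] show "Poly_Mapping.keys e \<subseteq> {..<N}"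
    unfolding polyR_def by blast
qed

lemma one_in_polyR: "(1 :: 'k::field mpoly) \<in> polyR N"
  unfolding polyR_def by simp

lemma is_ideal_polyR: "is_ideal N (polyR N :: 'k::field mpoly set)"
proof -
  have "(0 :: 'k mpoly) \<in> polyR N"
    unfolding polyR_def by simp
  then show ?thesis
    unfolding is_ideal_def using polyR_add polyR_mult by blast
qed

lemma monomial_single_in_monomials:
  "i < N \<Longrightarrow> (monomial (Poly_Mapping.single i k) :: 'k::field mpoly) \<in> monomials N"
  unfolding monomials_def by (intro CollectI exI[of _ "Poly_Mapping.single i k"]) simp

lemma monomials_subset_polyR: "monomials N \<subseteq> (polyR N :: 'k::field mpoly set)"
  unfolding monomials_def polyR_def by (auto simp: keys_monomial)

lemma ideal_gen_least: "is_ideal N I \<Longrightarrow> S \<subseteq> I \<Longrightarrow> ideal_gen N S \<subseteq> I"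
  unfolding ideal_gen_def by blast

lemma ideal_gen_superset: "S \<subseteq> ideal_gen N S"
  unfolding ideal_gen_def by blast

lemma ideal_gen_eq_polyR_if_one:
  assumes "S \<subseteq> (polyR N :: 'k::field mpoly set)" and "1 \<in> S"
  shows "ideal_gen N S = polyR N"
proof
  show "ideal_gen N S \<subseteq> polyR N"
    using ideal_gen_least[OF is_ideal_polyR assms(1)] .
  show "polyR N \<subseteq> ideal_gen N S"
  proof
    fix r :: "'k mpoly" assume r: "r \<in> polyR N"
    show "r \<in> ideal_gen N S"
      unfolding ideal_gen_def
    proof (rule InterI)
      fix I assume "I \<in> {I. is_ideal N I \<and> S \<subseteq> I}"
      with assms(2) have "is_ideal N I" and "1 \<in> I"
        by auto
      with r have "r * 1 \<in> I"
        unfolding is_ideal_def by blast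
      then show "r \<in> I"
        by simp
    qed
  qed
qed

lemma mult_in_ideal_mult: "f \<in> A \<Longrightarrow> g \<in> B \<Longrightarrow> (f * g :: 'k::field mpoly) \<in> ideal_mult N A B"
  unfolding ideal_mult_def by (rule subsetD[OF ideal_gen_superset]) blast

lemma Mon_proper_generators:
  assumes "A \<in> Mon N" and "A \<noteq> polyR N"
  obtains S where "S \<subseteq> monomials N" and "A = ideal_gen N S" and "(1 :: 'k::field mpoly) \<notin> S"
proof -
  obtain S where S: "S \<subseteq> monomials N" "A = ideal_gen N (S :: 'k mpoly set)"
    using assms(1) unfolding Mon_def by blast
  moreover have "1 \<notin> S"
    using assms(2) ideal_gen_eq_polyR_if_one[OF subset_trans[OF S(1) monomials_subset_polyR]] S(2)
    by blast
  ultimately show thesis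
    using that by blast
qed

definition multiples :: "nat \<Rightarrow> (nat \<Rightarrow>\<^sub>0 nat) set \<Rightarrow> 'k::field mpoly set" where
  "multiples N E = {p \<in> polyR N. \<forall>e \<in> Poly_Mapping.keys p. \<exists>s \<in> E. exp_dvd s e}"

lemma add_in_multiples:
  "f \<in> multiples N E \<Longrightarrow> g \<in> multiples N E \<Longrightarrow> (f + g :: 'k::field mpoly) \<in> multiples N E"
  unfolding multiples_def using polyR_add keys_add[of f g] by blast

lemma mult_in_multiples:
  assumes "f \<in> multiples N E" and "g \<in> multiples N F"
  shows "(f * g :: 'k::field mpoly) \<in> multiples N {s + t | s t. s \<in> E \<and> t \<in> F}"
  unfolding multiples_def
proof (intro CollectI conjI ballI)
  show "f * g \<in> polyR N"
    using assms polyR_mult unfolding multiples_def by blast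
  fix e assume "e \<in> Poly_Mapping.keys (f * g)"
  then obtain a b where "e = a + b" "a \<in> Poly_Mapping.keys f" "b \<in> Poly_Mapping.keys g"
    using keys_mult by blast
  moreover from this obtain s t where "s \<in> E" "exp_dvd s a" "t \<in> F" "exp_dvd t b"
    using assms unfolding multiples_def by blast
  ultimately show "\<exists>u \<in> {s + t | s t. s \<in> E \<and> t \<in> F}. exp_dvd u e"
    using exp_dvd_add by blast
qed

lemma polyR_mult_in_multiples:
  assumes "r \<in> polyR N" and "f \<in> multiples N E"
  shows "(r * f :: 'k::field mpoly) \<in> multiples N E"
  unfolding multiples_def
proof (intro CollectI conjI ballI)
  show "r * f \<in> polyR N"
    using assms polyR_mult unfolding multiples_def by blast
  fix e assume "e \<in> Poly_Mapping.keys (r * f)"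
  then obtain a b where "e = a + b" "b \<in> Poly_Mapping.keys f"
    using keys_mult by blast
  then show "\<exists>s \<in> E. exp_dvd s e"
    using assms(2) exp_dvd_add_left unfolding multiples_def by blast
qed

lemma is_ideal_multiples: "is_ideal N (multiples N E :: 'k::field mpoly set)"
proof -
  have "multiples N E \<subseteq> polyR N" and "(0 :: 'k mpoly) \<in> multiples N E"
    unfolding multiples_def polyR_def by auto
  with add_in_multiples polyR_mult_in_multiples show ?thesis
    unfolding is_ideal_def by blast
qed

lemma monomial_in_multiplesD:
  "(monomial e :: 'k::field mpoly) \<in> multiples N E \<Longrightarrow> \<exists>s \<in> E. exp_dvd s e"
  unfolding multiples_def by (simp add: keys_monomial)

lemma ideal_gen_subset_multiples:
  assumes "S \<subseteq> monomials N"
  shows "ideal_gen N S \<subseteq> (multiples N {e. monomial e \<in> S} :: 'k::field mpoly set)"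
proof (rule ideal_gen_least[OF is_ideal_multiples], rule subsetI)
  fix p assume "p \<in> S"
  with assms obtain e where "p = monomial e" "Poly_Mapping.keys e \<subseteq> {..<N}"
    unfolding monomials_def by blast
  with \<open>p \<in> S\<close> show "p \<in> multiples N {e. monomial e \<in> S}"
    unfolding multiples_def polyR_def by (auto simp: keys_monomial intro: exp_dvd_refl)
qed

lemma ideal_mult_subset_multiples:
  assumes "A \<subseteq> (multiples N E :: 'k::field mpoly set)" and "B \<subseteq> multiples N F"
  shows "ideal_mult N A B \<subseteq> multiples N {s + t | s t. s \<in> E \<and> t \<in> F}"
  unfolding ideal_mult_def
  by (rule ideal_gen_least[OF is_ideal_multiples]) (use assms mult_in_multiples in blast)

lemma monomial_in_product_of_monomial_ideals:
  assumes "S \<subseteq> monomials N" and "T \<subseteq> monomials N"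
    and "(monomial e :: 'k::field mpoly) \<in> ideal_mult N (ideal_gen N S) (ideal_gen N T)"
  obtains s t where "monomial s \<in> S" and "monomial t \<in> T" and "exp_dvd (s + t) e"
  using ideal_mult_subset_multiples[OF ideal_gen_subset_multiples ideal_gen_subset_multiples,
      OF assms(1,2)] assms(3) monomial_in_multiplesD by blast

definition pure_powers_ideal :: "nat \<Rightarrow> nat \<Rightarrow> nat \<Rightarrow> nat \<Rightarrow> nat \<Rightarrow> 'k::field mpoly set" where
  "pure_powers_ideal N i m j n =
    ideal_gen N {monomial (Poly_Mapping.single i m), monomial (Poly_Mapping.single j n)}"

lemma generators_in_pure_powers_ideal:
  "monomial (Poly_Mapping.single i m) \<in> pure_powers_ideal N i m j n"
  "monomial (Poly_Mapping.single j n) \<in> pure_powers_ideal N i m j n"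
  unfolding pure_powers_ideal_def using ideal_gen_superset by blast+

lemma keys_pure_powers_ideal:
  assumes "f \<in> pure_powers_ideal N i m j n" and "e \<in> Poly_Mapping.keys (f :: 'k::field mpoly)"
    and "i < N" and "j < N"
  shows "m \<le> Poly_Mapping.lookup e i \<or> n \<le> Poly_Mapping.lookup e j"
proof -
  have "{monomial (Poly_Mapping.single i m), monomial (Poly_Mapping.single j n)} \<subseteq>
      (monomials N :: 'k mpoly set)"
    using assms(3,4) monomial_single_in_monomials by blast
  from subsetD[OF ideal_gen_subset_multiples[OF this] assms(1)[unfolded pure_powers_ideal_def]]
  show ?thesis
    using assms(2) unfolding multiples_def by (auto simp: monomial_inject exp_dvd_single_iff)
qed

lemma pure_powers_ideal_in_Mon:
  assumes "i < N" and "j < N"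
  shows "pure_powers_ideal N i m j n \<in> (Mon N :: 'k::field mpoly set set)"
proof -
  have "{monomial (Poly_Mapping.single i m), monomial (Poly_Mapping.single j n)} \<subseteq>
      (monomials N :: 'k mpoly set)"
    using assms monomial_single_in_monomials by blast
  moreover have "pure_powers_ideal N i m j n \<noteq> ({0} :: 'k mpoly set)"
    using generators_in_pure_powers_ideal(1)[of i m N j n]
    by (metis keys_monomial keys_zero insert_not_empty singletonD)
  ultimately show ?thesis
    unfolding Mon_def pure_powers_ideal_def by blast
qed

lemma pure_powers_ideal_proper:
  assumes "i < N" and "j < N" and "m > 0" and "n > 0"
  shows "pure_powers_ideal N i m j n \<noteq> (polyR N :: 'k::field mpoly set)"
proof
  assume "pure_powers_ideal N i m j n = (polyR N :: 'k mpoly set)"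
  then have "(1 :: 'k mpoly) \<in> pure_powers_ideal N i m j n"
    using one_in_polyR by simp
  from keys_pure_powers_ideal[OF this _ assms(1,2), of 0] assms(3,4) show False
    by simp
qed

lemma pure_powers_ideal_not_product:
  assumes "i \<noteq> j" and "i < N" and "j < N"
    and A: "A \<in> Mon N" "A \<noteq> polyR N" and B: "B \<in> Mon N" "B \<noteq> polyR N"
  shows "pure_powers_ideal N i m j n \<noteq> (ideal_mult N A B :: 'k::field mpoly set)"
proof
  assume I_eq: "pure_powers_ideal N i m j n = ideal_mult N A B"
  obtain S where S: "S \<subseteq> monomials N" "A = ideal_gen N S" "1 \<notin> S"
    using Mon_proper_generators[OF A] .
  obtain T where T: "T \<subseteq> monomials N" "B = ideal_gen N T" "1 \<notin> T"
    using Mon_proper_generators[OF B] .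
  have gens: "monomial (Poly_Mapping.single i m) \<in> ideal_mult N (ideal_gen N S) (ideal_gen N T)"
    "monomial (Poly_Mapping.single j n) \<in> ideal_mult N (ideal_gen N S) (ideal_gen N T)"
    unfolding S(2)[symmetric] T(2)[symmetric] I_eq[symmetric]
    by (rule generators_in_pure_powers_ideal)+
  note product_generators = monomial_in_product_of_monomial_ideals[OF S(1) T(1)]
  obtain s t where st: "monomial s \<in> S" "monomial t \<in> T"
    "exp_dvd (s + t) (Poly_Mapping.single i m)"
    using product_generators[OF gens(1)] .
  have "t \<noteq> 0"
    using st(2) T(3) monomial_zero by metis
  then have s: "Poly_Mapping.lookup s i < m" "Poly_Mapping.lookup s j = 0"
    using exp_dvd_single_proper_factor[OF st(3)] \<open>i \<noteq> j\<close> by auto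
  obtain s' t' where st': "monomial s' \<in> S" "monomial t' \<in> T"
    "exp_dvd (t' + s') (Poly_Mapping.single j n)"
    using product_generators[OF gens(2)] by (metis add.commute)
  have "s' \<noteq> 0"
    using st'(1) S(3) monomial_zero by metis
  then have t': "Poly_Mapping.lookup t' j < n" "Poly_Mapping.lookup t' i = 0"
    using exp_dvd_single_proper_factor[OF st'(3)] \<open>i \<noteq> j\<close> by auto
  have "(monomial s :: 'k mpoly) \<in> A" and "(monomial t' :: 'k mpoly) \<in> B"
    unfolding S(2) T(2) using st(1) st'(2) ideal_gen_superset by blast+
  then have "monomial s * monomial t' \<in> ideal_mult N A B"
    by (rule mult_in_ideal_mult)
  then have "monomial (s + t') \<in> ideal_mult N A B"
    by (simp add: monomial_mult)
  from keys_pure_powers_ideal[OF this[folded I_eq] _ assms(2,3)]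
  have "m \<le> Poly_Mapping.lookup (s + t') i \<or> n \<le> Poly_Mapping.lookup (s + t') j"
    by (simp add: keys_monomial)
  then show False
    using s t' by (simp add: lookup_add)
qed

theorem theorem4p9:
  fixes N m n :: nat
  assumes "N \<ge> 2" and "m > 0" and "n > 0"
  shows "is_atom_Mon N (ideal_gen N {(var 0 :: 'k::field mpoly) ^ m, var 1 ^ n})"
proof -
  have vars: "0 < N" "1 < N"
    using assms(1) by auto
  have "pure_powers_ideal N 0 m 1 n \<in> (Mon N :: 'k mpoly set set)"
    using pure_powers_ideal_in_Mon[OF vars] .
  moreover have "pure_powers_ideal N 0 m 1 n \<noteq> (polyR N :: 'k mpoly set)"
    using pure_powers_ideal_proper[OF vars assms(2,3)] .
  moreover have "\<not> (\<exists>A \<in> Mon N - {polyR N}. \<exists>B \<in> Mon N - {polyR N}.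
      (pure_powers_ideal N 0 m 1 n :: 'k mpoly set) = ideal_mult N A B)"
    using pure_powers_ideal_not_product[OF zero_neq_one vars] by blast
  ultimately show ?thesis
    unfolding is_atom_Mon_def var_power pure_powers_ideal_def by blast
qed

end
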